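(* Let $|p|<1$, $|P|<1$, let $n\ge0$ be an integer, and let $a,b,c,d,q,r,s,t$ and $A,B,C,D,Q,R,S,T$ be nonzero complex numbers such that all expressions below are well defined. For a tuple $\pi=(a,b,c,d;q,r,s,t;p)$ define, for integers $k\ge0$, \begin{align*} \lambda_k(\pi)&=\frac{\theta\big(ad(rst/q)^k,\,br^k/(dq^k),\,cs^k/(dq^k),\,adt^k/(bcq^k);p\big)}{\theta\big(ad,\,b/d,\,c/d,\,ad/(bc);p\big)}\\ &\quad\times\frac{(a;rst/q^2,p)_k(b;r,p)_k(c;s,p)_k(ad^2/(bc);t,p)_k}{(dq;q,p)_k(adst/(bq);st/q,p)_k(adrt/(cq);rt/q,p)_k(bcrs/(dq);rs/q,p)_k}\,q^k,\\ \Phi_n(\pi)&=\frac{(arst/q^2;rst/q^2,p)_n(br;r,p)_n(cs;s,p)_n(ad^2t/(bc);t,p)_n}{(dq;q,p)_n(adst/(bq);st/q,p)_n(adrt/(cq);rt/q,p)_n(bcrs/(dq);rs/q,p)_n},\\ G_{n,k}(\pi)&=\frac{\theta(a,b,c,ad^2/(bc);p)}{d\,\theta(ad,b/d,c/d,ad/(bc);p)}\cdot\frac{(q^{-n}/d;q,p)_k\,(b(q/st)^n/(ad);st/q,p)_k}{((q^2/rst)^n/a;rst/q^2,p)_k\,(r^{-n}/b;r,p)_k}\\ &\qquad\times\frac{(c(q/rt)^n/(ad);rt/q,p)_k\,(d(q/rs)^n/(bc);rs/q,p)_k}{(s^{-n}/c;s,p)_k\,(bct^{-n}/(ad^2);t,p)_k}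 -\frac{\theta(d,ad/b,ad/c,bc/d;p)}{d\,\theta(ad,b/d,c/d,ad/(bc);p)}\cdot\frac{1}{\Phi_n(\pi)}. \end{align*} With $\pi=(a,b,c,d;q,r,s,t;p)$ and $\Pi=(A,B,C,D;Q,R,S,T;P)$, $$\sum_{k=0}^n\lambda_k(\pi)\,G_{n,k}(\Pi)=\frac{\Phi_n(\pi)}{\Phi_n(\Pi)}\sum_{k=0}^n\lambda_k(\Pi)\,G_{n,k}(\pi).$$
   Context: For $|p|<1$ and $x\neq 0$, $\theta(x;p)=(x;p)_\infty(p/x;p)_\infty$ where $(x;p)_\infty=\prod_{k\ge 0}(1-xp^k)$, and $\theta(x_1,\dots,x_m;p)=\prod_{i=1}^m\theta(x_i;p)$. For $a\ne0$ and integer $k\ge0$, $(a;q,p)_k=\prod_{j=0}^{k-1}\theta(aq^j;p)$ (empty product $=1$). In $\lambda_k(\Pi),\Phi_n(\Pi),G_{n,k}(\Pi)$ every lowercase letter is replaced by the corresponding uppercase letter (including the nome $p\mapsto P$ and base $q\mapsto Q$). Notation such as $(q/st)^n$ means $(q/(st))^n$. *)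

theory Defs
  imports "HOL-Analysis.Analysis"
begin

definition qpinf :: "complex \<Rightarrow> complex \<Rightarrow> complex" where
  "qpinf x p = (\<Prod>k. 1 - x  *  p ^ k)"

definition theta :: "complex \<Rightarrow> complex \<Rightarrow> complex" where
  "theta x p = qpinf x p  *  qpinf (p / x) p"

definition epoch :: "complex \<Rightarrow> complex \<Rightarrow> complex \<Rightarrow> nat \<Rightarrow> complex" where
  "epoch a q p k = (\<Prod>j<k. theta (a  *  q ^ j) p)"

definition lam :: "complex \<Rightarrow> complex \<Rightarrow> complex \<Rightarrow> complex \<Rightarrow> complex \<Rightarrow> complex
    \<Rightarrow> complex \<Rightarrow> complex \<Rightarrow> complex \<Rightarrow> nat \<Rightarrow> complex" where
  "lam a b c d q r s t p k =
     (theta (a * d * (r * s * t/q)^k) p  *  theta (b * r^k/(d * q^k)) p  *  theta (c * s^k/(d * q^k)) p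
         *  theta (a * d * t^k/(b * c * q^k)) p)
     / (theta (a * d) p  *  theta (b/d) p  *  theta (c/d) p  *  theta (a * d/(b * c)) p)
      *  ((epoch a (r * s * t/q^2) p k  *  epoch b r p k  *  epoch c s p k  *  epoch (a * d^2/(b * c)) t p k)
     / (epoch (d * q) q p k  *  epoch (a * d * s * t/(b * q)) (s * t/q) p k  *  epoch (a * d * r * t/(c * q)) (r * t/q) p k
         *  epoch (b * c * r * s/(d * q)) (r * s/q) p k))
      *  q ^ k"

definition Phi :: "complex \<Rightarrow> complex \<Rightarrow> complex \<Rightarrow> complex \<Rightarrow> complex \<Rightarrow> complex
    \<Rightarrow> complex \<Rightarrow> complex \<Rightarrow> complex \<Rightarrow> nat \<Rightarrow> complex" where
  "Phi a b c d q r s t p n =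
     (epoch (a * r * s * t/q^2) (r * s * t/q^2) p n  *  epoch (b * r) r p n  *  epoch (c * s) s p n
         *  epoch (a * d^2 * t/(b * c)) t p n)
     / (epoch (d * q) q p n  *  epoch (a * d * s * t/(b * q)) (s * t/q) p n  *  epoch (a * d * r * t/(c * q)) (r * t/q) p n
         *  epoch (b * c * r * s/(d * q)) (r * s/q) p n)"

definition G :: "complex \<Rightarrow> complex \<Rightarrow> complex \<Rightarrow> complex \<Rightarrow> complex \<Rightarrow> complex
    \<Rightarrow> complex \<Rightarrow> complex \<Rightarrow> complex \<Rightarrow> nat \<Rightarrow> nat \<Rightarrow> complex" where
  "G a b c d q r s t p n k =
     (theta a p  *  theta b p  *  theta c p  *  theta (a * d^2/(b * c)) p)
       / (d  *  (theta (a * d) p  *  theta (b/d) p  *  theta (c/d) p  *  theta (a * d/(b * c)) p))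
      *  ((epoch (1/(q^n * d)) q p k  *  epoch (b * (q/(s * t))^n/(a * d)) (s * t/q) p k)
        / (epoch ((q^2/(r * s * t))^n/a) (r * s * t/q^2) p k  *  epoch (1/(r^n * b)) r p k))
      *  ((epoch (c * (q/(r * t))^n/(a * d)) (r * t/q) p k  *  epoch (d * (q/(r * s))^n/(b * c)) (r * s/q) p k)
        / (epoch (1/(s^n * c)) s p k  *  epoch (b * c/(t^n * a * d^2)) t p k))
     - (theta d p  *  theta (a * d/b) p  *  theta (a * d/c) p  *  theta (b * c/d) p)
       / (d  *  (theta (a * d) p  *  theta (b/d) p  *  theta (c/d) p  *  theta (a * d/(b * c)) p))
      *  (1 / Phi a b c d q r s t p n)"

text \<open>"All expressions are well defined": parameters nonzero, |p|<1, and every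
  denominator occurring in lam_k (k \<le> n), Phi_n, 1/Phi_n and G_{n,k} (k \<le> n) is nonzero.
  Since (x;q,p)_k divides (x;q,p)_n for k \<le> n, it suffices to require this at k = n.\<close>
definition well_defined :: "complex \<Rightarrow> complex \<Rightarrow> complex \<Rightarrow> complex \<Rightarrow> complex \<Rightarrow> complex
    \<Rightarrow> complex \<Rightarrow> complex \<Rightarrow> complex \<Rightarrow> nat \<Rightarrow> bool" where
  "well_defined a b c d q r s t p n \<longleftrightarrow>
     norm p < 1 \<and>
     a \<noteq> 0 \<and> b \<noteq> 0 \<and> c \<noteq> 0 \<and> d \<noteq> 0 \<and> q \<noteq> 0 \<and> r \<noteq> 0 \<and> s \<noteq> 0 \<and> t \<noteq> 0 \<and>
     theta (a * d) p  *  theta (b/d) p  *  theta (c/d) p  *  theta (a * d/(b * c)) p \<noteq> 0 \<and>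
     epoch (d * q) q p n  *  epoch (a * d * s * t/(b * q)) (s * t/q) p n  *  epoch (a * d * r * t/(c * q)) (r * t/q) p n
         *  epoch (b * c * r * s/(d * q)) (r * s/q) p n \<noteq> 0 \<and>
     epoch (a * r * s * t/q^2) (r * s * t/q^2) p n  *  epoch (b * r) r p n  *  epoch (c * s) s p n
         *  epoch (a * d^2 * t/(b * c)) t p n \<noteq> 0 \<and>
     epoch ((q^2/(r * s * t))^n/a) (r * s * t/q^2) p n  *  epoch (1/(r^n * b)) r p n \<noteq> 0 \<and>
     epoch (1/(s^n * c)) s p n  *  epoch (b * c/(t^n * a * d^2)) t p n \<noteq> 0"

end

theory Submission
  imports Defs "HOL-Complex_Analysis.Complex_Analysis"
begin

(*
  Everything rests on Weierstrass' addition formula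
    theta(a,b,c,a d^2/(b c)) - theta(d,a d/b,a d/c,b c/d) = d theta(a d,b/d,c/d,a d/(b c)).
  As functions of a, the difference of its two sides and theta(a, a d^2/(b c)) pick up the same
  factor under a -> p a, so their quotient is invariant under multiplication by p.  The difference
  vanishes at the two zeros a = 1 and a = b c/d^2 of the denominator, so the quotient is holomorphic
  on C - {0}; bounded on a fundamental annulus, it is constant by Liouville, and it vanishes at
  a = b/d.  Non-generic parameters follow by continuity.

  Applied to the parameters shifted k times, the addition formula makes lambda_k telescope:
  lambda_(k+1) = alpha (Phi_(k+1) - Phi_k) and lambda_0 = 1 = alpha - beta, where alpha and beta are
  the two theta quotients in G_(n,k); hence sum_(j<=m) lambda_j = alpha Phi_m - beta.  Reversing the
  last k factors of each (x;q,p)_n turns G_(n,k) into (alpha Phi_(n-k) - beta)/Phi_n, that is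
  Phi_n^-1 sum_(j<=n-k) lambda_j.  Both sides of the identity are therefore equal to
  Phi_n(Pi)^-1 sum_(i+j<=n) lambda_i(pi) lambda_j(Pi).
*)

section \<open>The theta function\<close>

lemma convergent_prod_qpinf:
  fixes x p :: complex
  assumes "norm p < 1"
  shows "convergent_prod (\<lambda>k. 1 - x * p ^ k)"
proof (rule abs_convergent_prod_imp_convergent_prod, rule summable_imp_abs_convergent_prod)
  show "summable (\<lambda>k. norm (1 - x * p ^ k - 1))"
    using assms by (simp add: norm_mult norm_power summable_mult summable_geometric)
qed

lemma qpinf_eq_0_iff:
  fixes x p :: complex
  assumes "norm p < 1"
  shows "qpinf x p = 0 \<longleftrightarrow> (\<exists>k. x * p ^ k = 1)"
proof -
  have "(\<lambda>k. 1 - x * p ^ k) has_prod qpinf x p"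
    unfolding qpinf_def by (rule convergent_prod_has_prod[OF convergent_prod_qpinf[OF assms]])
  from has_prod_eq_0_iff[OF this] show ?thesis
    by (auto simp: image_iff eq_commute[of 0] right_minus_eq)
qed

lemma qpinf_nonzero:
  fixes x p :: complex
  assumes "norm x < 1" "norm p < 1"
  shows "qpinf x p \<noteq> 0"
proof -
  have "norm (x * p ^ k) \<le> norm x" for k
    using assms(2) by (simp add: norm_mult norm_power mult_left_le power_le_one)
  then have "x * p ^ k \<noteq> 1" for k
    using assms(1) by (metis norm_one not_le)
  then show ?thesis
    using qpinf_eq_0_iff[OF assms(2), of x] by blast
qed

lemma qpinf_shift:
  fixes x p :: complex
  assumes "norm p < 1"
  shows "qpinf x p = (1 - x) * qpinf (p * x) p"
proof (cases "x = 1")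
  case True
  then have "qpinf x p = 0"
    using qpinf_eq_0_iff[OF assms, of x] by (metis mult_1_right power_0)
  with True show ?thesis
    by simp
next
  case False
  have "qpinf (p * x) p = (\<Prod>k. (\<lambda>k. 1 - x * p ^ k) (Suc k))"
    unfolding qpinf_def by (simp add: mult_ac)
  also have "\<dots> = qpinf x p / (1 - x)"
    unfolding qpinf_def using False by (subst prodinf_split_head[OF convergent_prod_qpinf[OF assms]]) auto
  finally show ?thesis
    using False by simp
qed

lemma qpinf_nome_0: "qpinf x 0 = 1 - x"
proof -
  have "qpinf x 0 = (\<Prod>k\<in>{0}. 1 - x * 0 ^ k)"
    unfolding qpinf_def by (rule prodinf_finite) auto
  then show ?thesis
    by simp
qed

lemma theta_nome_0: "theta x 0 = 1 - x"
  unfolding theta_def qpinf_nome_0 by simp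

lemma theta_eq_factor:
  assumes "norm p < 1"
  shows "theta x p = (1 - x) * (qpinf (p * x) p * qpinf (p / x) p)"
  unfolding theta_def using qpinf_shift[OF assms, of x] by simp

lemma theta_1:
  assumes "norm p < 1"
  shows "theta 1 p = 0"
  using theta_eq_factor[OF assms, of 1] by simp

lemma theta_inverse:
  fixes x p :: complex
  assumes "norm p < 1" "x \<noteq> 0"
  shows "theta (1 / x) p = - theta x p / x"
proof -
  have "theta (1 / x) p = (1 - 1 / x) * qpinf (p / x) p * qpinf (p * x) p"
    unfolding theta_def using qpinf_shift[OF assms(1), of "1 / x"] by simp
  also have "\<dots> = - theta x p / x"
    unfolding theta_eq_factor[OF assms(1)] using assms(2) by (simp add: field_simps)
  finally show ?thesis .
qed

lemma theta_mult_nome: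
  fixes x p :: complex
  assumes "norm p < 1" "p \<noteq> 0" "x \<noteq> 0"
  shows "theta (p * x) p = - theta x p / x"
proof -
  have "theta (p * x) p = theta (1 / x) p"
    unfolding theta_def using assms by (simp add: mult.commute)
  then show ?thesis
    using theta_inverse[OF assms(1,3)] by simp
qed

lemma theta_eq_0_imp_power_int:
  fixes x p :: complex
  assumes "norm p < 1" "x \<noteq> 0" "theta x p = 0"
  shows "\<exists>k::int. x = p powi k"
proof -
  from assms(3) have "qpinf x p = 0 \<or> qpinf (p / x) p = 0"
    unfolding theta_def by simp
  then consider k where "x * p ^ k = 1" | k where "p / x * p ^ k = 1"
    using qpinf_eq_0_iff[OF assms(1)] by blast
  then show ?thesis
  proof cases
    case (1 k)
    then have "p \<noteq> 0 \<or> k = 0"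
      by (cases k) auto
    with 1 have "x = p powi (- int k)"
      by (auto simp: power_int_minus field_simps)
    then show ?thesis ..
  next
    case (2 k)
    then have "x = p ^ Suc k"
      using assms(2) by (simp add: field_simps)
    then have "x = p powi int (Suc k)"
      by (simp only: power_int_of_nat)
    then show ?thesis ..
  qed
qed

lemma theta_nonzero:
  fixes x p :: complex
  assumes "norm p < 1" "x \<noteq> 0" "\<And>k::int. x \<noteq> p powi k"
  shows "theta x p \<noteq> 0"
  using theta_eq_0_imp_power_int[OF assms(1,2)] assms(3) by blast

lemma uniform_limit_qpinf:
  fixes p :: complex
  assumes "norm p < 1"
  shows "uniform_limit (cball 0 R) (\<lambda>N x. \<Prod>k<N. 1 - x * p ^ k) (\<lambda>x. qpinf x p) sequentially"
proof -
  have "uniformly_convergent_on (cball 0 R) (\<lambda>N x. \<Prod>k<N. 1 - x * p ^ k)"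
  proof (rule uniformly_convergent_on_prod')
    show "continuous_on (cball 0 R) (\<lambda>x. 1 - x * p ^ k)" for k
      by (intro continuous_intros)
    show "uniformly_convergent_on (cball 0 R) (\<lambda>N x. \<Sum>k<N. norm (1 - x * p ^ k - 1))"
    proof (rule Weierstrass_m_test')
      show "norm (norm (1 - x * p ^ k - 1)) \<le> R * norm p ^ k" if "x \<in> cball 0 R" for k x
      proof -
        have "norm (1 - x * p ^ k - 1) = norm x * norm p ^ k"
          by (simp add: norm_mult norm_power)
        with that show ?thesis
          by (simp add: mult_right_mono)
      qed
      show "summable (\<lambda>k. R * norm p ^ k)"
        using assms by (simp add: summable_mult summable_geometric)
    qed
  qed simp
  then obtain g where g: "uniform_limit (cball 0 R) (\<lambda>N x. \<Prod>k<N. 1 - x * p ^ k) g sequentially"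
    by (auto simp: uniformly_convergent_on_def)
  also have "?this \<longleftrightarrow> ?thesis"
  proof (rule uniform_limit_cong')
    fix x :: complex assume "x \<in> cball 0 R"
    have "(\<lambda>N. \<Prod>k<N. 1 - x * p ^ k) \<longlonglongrightarrow> g x"
      by (rule tendsto_uniform_limitI[OF g \<open>x \<in> cball 0 R\<close>])
    then have "(\<lambda>N. \<Prod>k<Suc N. 1 - x * p ^ k) \<longlonglongrightarrow> g x"
      by (rule LIMSEQ_Suc)
    moreover have "(\<lambda>N. \<Prod>k<Suc N. 1 - x * p ^ k) \<longlonglongrightarrow> qpinf x p"
      using convergent_prod_LIMSEQ[OF convergent_prod_qpinf[OF assms]]
      unfolding lessThan_Suc_atMost qpinf_def .
    ultimately show "g x = qpinf x p"
      using LIMSEQ_unique by blast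
  qed (rule refl)
  finally show ?thesis .
qed

lemma holomorphic_qpinf [holomorphic_intros]:
  fixes p :: complex
  assumes "norm p < 1" "f holomorphic_on S"
  shows "(\<lambda>x. qpinf (f x) p) holomorphic_on S"
proof -
  have "(\<lambda>x. qpinf x p) holomorphic_on UNIV"
  proof (rule holomorphic_uniform_sequence)
    fix z :: complex
    have "uniform_limit (cball z 1) (\<lambda>N x. \<Prod>k<N. 1 - x * p ^ k) (\<lambda>x. qpinf x p) sequentially"
      by (rule uniform_limit_on_subset[OF uniform_limit_qpinf[OF assms(1), of "norm z + 1"]])
        (simp add: cball_subset_cball_iff)
    then show "\<exists>d>0. cball z d \<subseteq> UNIV \<and>
        uniform_limit (cball z d) (\<lambda>N x. \<Prod>k<N. 1 - x * p ^ k) (\<lambda>x. qpinf x p) sequentially"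
      by (intro exI[of _ 1]) auto
  qed (auto intro!: holomorphic_intros)
  from holomorphic_on_compose[OF assms(2) holomorphic_on_subset[OF this]] show ?thesis
    by (simp add: o_def)
qed

lemma holomorphic_theta [holomorphic_intros]:
  fixes p :: complex
  assumes "norm p < 1" "f holomorphic_on S" "\<And>x. x \<in> S \<Longrightarrow> f x \<noteq> 0"
  shows "(\<lambda>x. theta (f x) p) holomorphic_on S"
  unfolding theta_def using assms by (intro holomorphic_intros) auto

section \<open>Holomorphic functions on the punctured plane\<close>

lemma filtermap_times_at:
  fixes c z :: "'a::real_normed_field"
  assumes "c \<noteq> 0"
  shows "filtermap (times c) (at z) = at (c * z)"
proof (rule filtermap_fun_inverse[where g = "\<lambda>x. inverse c * x"])
  have "((\<lambda>x. inverse c * x) \<longlongrightarrow> inverse c * (c * z)) (at (c * z))"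
    by (intro tendsto_intros)
  moreover have "inverse c * (c * z) = z"
    using assms by (simp add: field_simps)
  ultimately have "((\<lambda>x. inverse c * x) \<longlongrightarrow> z) (at (c * z))"
    by simp
  moreover have "eventually (\<lambda>x. inverse c * x \<noteq> z) (at (c * z))"
    unfolding eventually_at_filter using assms by (intro always_eventually) (auto simp: field_simps)
  ultimately show "filterlim (\<lambda>x. inverse c * x) (at z) (at (c * z))"
    using assms by (simp add: filterlim_at)
  have "(times c \<longlongrightarrow> c * z) (at z)"
    by (intro tendsto_intros)
  moreover have "eventually (\<lambda>x. c * x \<noteq> c * z) (at z)"
    unfolding eventually_at_filter using assms by (intro always_eventually) auto
  ultimately show "filterlim (times c) (at (c * z)) (at z)"
    by (simp add: filterlim_at)
  show "eventually (\<lambda>x. c * (inverse c * x) = x) (at (c * z))"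
    using assms by simp
qed

lemma mult_periodic_power_int:
  fixes h :: "'a::field \<Rightarrow> 'b"
  assumes "p \<noteq> 0" "\<And>x. x \<noteq> 0 \<Longrightarrow> h (p * x) = h x" "x \<noteq> 0"
  shows "h (p powi k * x) = h x"
proof -
  have pow: "h (p ^ n * x) = h x" if "x \<noteq> 0" for n x
    using that by (induction n) (use assms(1,2) in \<open>auto simp: mult.assoc\<close>)
  show ?thesis
  proof (cases "k \<ge> 0")
    case True
    then show ?thesis
      using pow[OF assms(3), of "nat k"] by (simp add: power_int_def)
  next
    case False
    then have inverse: "p ^ nat (- k) * (p powi k * x) = x"
      using assms(1) by (simp add: power_int_def field_simps)
    have "h (p powi k * x) = h (p ^ nat (- k) * (p powi k * x))"
      using assms(1,3) by (intro pow[symmetric]) simp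
    also have "\<dots> = h x"
      by (simp only: inverse)
    finally show ?thesis .
  qed
qed

lemma analytic_at_if_mult_periodic:
  fixes h :: "complex \<Rightarrow> complex"
  assumes "c \<noteq> 0" "z \<noteq> 0" "\<And>x. x \<noteq> 0 \<Longrightarrow> h (c * x) = h x" "h analytic_on {c * z}"
  shows "h analytic_on {z}"
proof -
  have "(h \<circ> times c) analytic_on {z}"
    by (rule analytic_on_compose_gen[OF _ assms(4)]) (auto intro!: analytic_intros)
  moreover have "eventually (\<lambda>x. x \<in> -{0}) (nhds z)"
    using assms(2) by (intro eventually_nhds_in_open) auto
  then have "eventually (\<lambda>x. (h \<circ> times c) x = h x) (nhds z)"
    by eventually_elim (simp add: assms(3))
  ultimately show ?thesis
    using analytic_at_cong by blast
qed

lemma exists_power_int_mult_in_annulus: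
  fixes p y :: complex
  assumes "0 < norm p" "norm p < 1" "y \<noteq> 0"
  shows "\<exists>k::int. norm p \<le> norm (p powi k * y) \<and> norm (p powi k * y) \<le> 1"
proof -
  define L where "L = ln (norm p)"
  have L: "L < 0" "norm p = exp L"
    using assms unfolding L_def by simp_all
  define t where "t = - ln (norm y) / L"
  define k where "k = \<lceil>t\<rceil>"
  have "t * L = - ln (norm y)"
    using L(1) unfolding t_def by simp
  moreover have "of_int k * L \<le> t * L" "(t + 1) * L \<le> of_int k * L"
    using L(1) unfolding k_def by (intro mult_right_mono_neg; linarith)+
  ultimately have "of_int k * L \<le> - ln (norm y)" "L - ln (norm y) \<le> of_int k * L"
    by (simp_all add: algebra_simps)
  moreover have "norm (p powi k * y) = exp (of_int k * L + ln (norm y))"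
    using assms by (simp add: norm_mult norm_power_int powr_real_of_int'[symmetric] powr_def L_def exp_add)
  ultimately show ?thesis
    using L(2) by (intro exI[of _ k]) simp
qed

lemma mult_periodic_holomorphic_constant:
  fixes h :: "complex \<Rightarrow> complex" and p :: complex
  assumes "0 < norm p" "norm p < 1" "h holomorphic_on -{0}" "\<And>x. x \<noteq> 0 \<Longrightarrow> h (p * x) = h x"
    and "x \<noteq> 0" "y \<noteq> 0"
  shows "h x = h y"
proof -
  define A where "A = {z::complex. norm p \<le> norm z \<and> norm z \<le> 1}"
  have "closed A"
    unfolding A_def by (intro closed_Collect_conj closed_Collect_le continuous_intros)
  moreover have "bounded A"
    unfolding A_def bounded_iff by auto
  ultimately have "compact A"
    by (simp add: compact_eq_bounded_closed)
  moreover have "A \<subseteq> -{0}"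
    using assms(1) by (auto simp: A_def)
  then have "continuous_on A h"
    using holomorphic_on_imp_continuous_on[OF assms(3)] continuous_on_subset by blast
  ultimately have "bounded (h ` A)"
    by (intro compact_imp_bounded compact_continuous_image)
  then obtain B where B: "\<And>z. z \<in> A \<Longrightarrow> norm (h z) \<le> B"
    unfolding bounded_iff by blast
  have "norm (h z) \<le> B" if z: "z \<noteq> 0" for z
  proof -
    obtain k where "p powi k * z \<in> A"
      using exists_power_int_mult_in_annulus[OF assms(1,2) z] unfolding A_def by blast
    then show ?thesis
      using B mult_periodic_power_int[of p h z k] assms(1,4) z by fastforce
  qed
  then have "bounded (range (h \<circ> exp))"
    unfolding bounded_iff by (intro exI[of _ B]) auto
  moreover have "(h \<circ> exp) holomorphic_on UNIV"
    by (rule holomorphic_on_compose_gen[OF _ assms(3)]) (auto intro!: holomorphic_intros)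
  ultimately have "(h \<circ> exp) constant_on UNIV"
    by (rule Liouville_theorem[rotated])
  then obtain c where "\<And>w. h (exp w) = c"
    unfolding constant_on_def by auto
  from this[of "Ln x"] this[of "Ln y"] show ?thesis
    using assms(5,6) by simp
qed

lemma remove_sings_divide_analytic_at_simple_zero:
  fixes f D K :: "complex \<Rightarrow> complex"
  assumes "open S" "z \<in> S" "f holomorphic_on S" "K holomorphic_on S" "f z = 0" "K z \<noteq> 0"
    and "\<And>y. y \<in> S \<Longrightarrow> D y = (y - z) * K y"
  shows "remove_sings (\<lambda>y. f y / D y) analytic_on {z}"
proof (rule remove_sings_analytic_at)
  have "isCont K z"
    using assms(1,2,4) holomorphic_on_imp_continuous_on continuous_on_eq_continuous_at by blast
  then obtain e where "e > 0" and K: "\<And>y. dist z y < e \<Longrightarrow> K y \<noteq> 0"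
    using continuous_at_avoid[of z K 0] assms(6) by blast
  have "open (S \<inter> ball z e)" "z \<in> S \<inter> ball z e"
    using assms(1) assms(2) \<open>e > 0\<close> by auto
  then obtain r where "r > 0" and r: "ball z r \<subseteq> S \<inter> ball z e"
    by (meson openE)
  have "(\<lambda>y. f y / D y) holomorphic_on ball z r - {z}"
  proof (rule holomorphic_transform)
    show "(\<lambda>y. f y / ((y - z) * K y)) holomorphic_on ball z r - {z}"
      using r K by (intro holomorphic_intros holomorphic_on_subset[OF assms(3)]
          holomorphic_on_subset[OF assms(4)]) auto
  qed (use r assms(7) in auto)
  then show "isolated_singularity_at (\<lambda>y. f y / D y) z"
    unfolding isolated_singularity_at_def using \<open>r > 0\<close>
    by (intro exI[of _ r]) (simp add: analytic_on_open open_delete)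
  have "(f has_field_derivative deriv f z) (at z)"
    using assms(1-3) holomorphic_derivI by blast
  then have "((\<lambda>y. (f y - f z) / (y - z)) \<longlongrightarrow> deriv f z) (at z)"
    by (simp add: has_field_derivative_iff)
  moreover have "(K \<longlongrightarrow> K z) (at z)"
    using \<open>isCont K z\<close> by (simp add: isCont_def)
  ultimately have "((\<lambda>y. ((f y - f z) / (y - z)) / K y) \<longlongrightarrow> deriv f z / K z) (at z)"
    using assms(6) by (rule tendsto_divide)
  moreover have "eventually (\<lambda>y. ((f y - f z) / (y - z)) / K y = f y / D y) (at z)"
    using eventually_at_in_open[OF assms(1,2)] by eventually_elim (simp add: assms(5,7))
  ultimately show "(\<lambda>y. f y / D y) \<midarrow>z\<rightarrow> deriv f z / K z"
    by (rule Lim_transform_eventually)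
qed

lemma continuous_on_zero_off_countable:
  fixes F :: "'a::euclidean_space \<Rightarrow> 'b::t1_space"
  assumes "open S" "continuous_on S F" "countable C" "\<And>z. z \<in> S - C \<Longrightarrow> F z = c" "z \<in> S"
  shows "F z = c"
proof (rule ccontr)
  assume "F z \<noteq> c"
  moreover have "isCont F z"
    using assms(1,2,5) continuous_on_eq_continuous_at by blast
  ultimately obtain e where "e > 0" and e: "\<And>y. dist z y < e \<Longrightarrow> F y \<noteq> c"
    using continuous_at_avoid[of z F c] by blast
  have "open (S \<inter> ball z e)" "z \<in> S \<inter> ball z e"
    using assms(1) assms(5) \<open>e > 0\<close> by auto
  then obtain r where "r > 0" and r: "ball z r \<subseteq> S \<inter> ball z e"
    by (meson openE)
  have "\<not> ball z r \<subseteq> C"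
    using uncountable_ball[OF \<open>r > 0\<close>] assms(3) countable_subset by blast
  then obtain y where "y \<in> ball z r" "y \<notin> C"
    by blast
  with r have "y \<in> S - C" "dist z y < e"
    by auto
  then show False
    using assms(4) e by blast
qed

lemma countable_power2_preimage:
  fixes A :: "complex set"
  assumes "countable A"
  shows "countable {z. z^2 \<in> A}"
proof (rule countable_subset)
  show "{z. z^2 \<in> A} \<subseteq> (\<Union>w\<in>A. {csqrt w, - csqrt w})"
  proof
    fix z assume "z \<in> {z. z^2 \<in> A}"
    moreover have "z = csqrt (z^2) \<or> z = - csqrt (z^2)"
      using power2_eq_iff[of z "csqrt (z^2)"] by simp
    ultimately show "z \<in> (\<Union>w\<in>A. {csqrt w, - csqrt w})"
      by blast
  qed
qed (use assms in simp)

section \<open>Weierstrass' addition formula\<close>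

text \<open>Every argument is
  written as \<open>x\<close> times a constant, so that \<open>x \<mapsto> p x\<close> acts uniformly on all factors.\<close>
definition theta_add_defect :: "complex \<Rightarrow> complex \<Rightarrow> complex \<Rightarrow> complex \<Rightarrow> complex \<Rightarrow> complex" where
  "theta_add_defect p b c d x =
     theta x p * theta b p * theta c p * theta (x * (d^2 / (b * c))) p
     - theta d p * theta (x * (d / b)) p * theta (x * (d / c)) p * theta (b * c / d) p
     - d * theta (x * d) p * theta (b / d) p * theta (c / d) p * theta (x * (d / (b * c))) p"

definition theta_add_denom :: "complex \<Rightarrow> complex \<Rightarrow> complex \<Rightarrow> complex \<Rightarrow> complex \<Rightarrow> complex" where
  "theta_add_denom p b c d x = theta x p * theta (x * (d^2 / (b * c))) p"

definition theta_add_quotient :: "complex \<Rightarrow> complex \<Rightarrow> complex \<Rightarrow> complex \<Rightarrow> complex \<Rightarrow> complex" where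
  "theta_add_quotient p b c d = remove_sings (\<lambda>x. theta_add_defect p b c d x / theta_add_denom p b c d x)"

lemma holomorphic_theta_add_defect:
  assumes "norm p < 1" "b \<noteq> 0" "c \<noteq> 0" "d \<noteq> 0"
  shows "theta_add_defect p b c d holomorphic_on -{0}"
  unfolding theta_add_defect_def using assms by (intro holomorphic_intros) auto

lemma holomorphic_theta_add_denom:
  assumes "norm p < 1" "b \<noteq> 0" "c \<noteq> 0" "d \<noteq> 0"
  shows "theta_add_denom p b c d holomorphic_on -{0}"
  unfolding theta_add_denom_def using assms by (intro holomorphic_intros) auto

context
  fixes p b c d :: complex
  assumes norm_p: "norm p < 1" and p: "p \<noteq> 0" and b: "b \<noteq> 0" and c: "c \<noteq> 0" and d: "d \<noteq> 0"
begin

lemma theta_add_defect_mult_nome: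
  assumes "x \<noteq> 0"
  shows "theta_add_defect p b c d (p * x) = theta_add_defect p b c d x / (x * x * (d^2 / (b * c)))"
proof -
  have shift: "theta (p * x * z) p = - theta (x * z) p / (x * z)" if "z \<noteq> 0" for z
    using theta_mult_nome[OF norm_p p, of "x * z"] that assms by (simp add: mult.assoc)
  have "theta_add_defect p b c d (p * x) =
      - theta x p / x * theta b p * theta c p * (- theta (x * (d^2 / (b * c))) p / (x * (d^2 / (b * c))))
      - theta d p * (- theta (x * (d / b)) p / (x * (d / b))) * (- theta (x * (d / c)) p / (x * (d / c)))
        * theta (b * c / d) p
      - d * (- theta (x * d) p / (x * d)) * theta (b / d) p * theta (c / d) p
        * (- theta (x * (d / (b * c))) p / (x * (d / (b * c))))"
    unfolding theta_add_defect_def theta_mult_nome[OF norm_p p assms]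
    using shift[of "d^2 / (b * c)"] shift[of "d / b"] shift[of "d / c"] shift[of d] shift[of "d / (b * c)"] b c d
    by simp
  also have "\<dots> = theta_add_defect p b c d x / (x * x * (d^2 / (b * c)))"
    unfolding theta_add_defect_def using b c d assms by (simp add: field_simps power2_eq_square)
  finally show ?thesis .
qed

lemma theta_add_denom_mult_nome:
  assumes "x \<noteq> 0"
  shows "theta_add_denom p b c d (p * x) = theta_add_denom p b c d x / (x * x * (d^2 / (b * c)))"
proof -
  have shift: "theta (p * x * (d^2 / (b * c))) p = - theta (x * (d^2 / (b * c))) p / (x * (d^2 / (b * c)))"
    using theta_mult_nome[OF norm_p p, of "x * (d^2 / (b * c))"] assms b c d by (simp add: mult.assoc)
  show ?thesis
    unfolding theta_add_denom_def theta_mult_nome[OF norm_p p assms] shift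
    using b c d assms by (simp add: field_simps power2_eq_square)
qed

lemma theta_add_defect_at_1: "theta_add_defect p b c d 1 = 0"
proof -
  have inv: "theta (b / d) p = - theta (d / b) p / (d / b)" "theta (c / d) p = - theta (d / c) p / (d / c)"
    "theta (d / (b * c)) p = - theta (b * c / d) p / (b * c / d)"
    using theta_inverse[OF norm_p, of "d / b"] theta_inverse[OF norm_p, of "d / c"]
      theta_inverse[OF norm_p, of "b * c / d"] b c d by simp_all
  show ?thesis
    unfolding theta_add_defect_def mult_1_left inv theta_1[OF norm_p] using b c d by (simp add: field_simps)
qed

lemma theta_add_defect_at_bc: "theta_add_defect p b c d (b * c / d^2) = 0"
proof -
  have args: "(b * c / d^2) * (d^2 / (b * c)) = 1" "(b * c / d^2) * (d / b) = c / d"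
    "(b * c / d^2) * (d / c) = b / d" "(b * c / d^2) * d = b * c / d" "(b * c / d^2) * (d / (b * c)) = 1 / d"
    using b c d by (simp_all add: field_simps power2_eq_square)
  show ?thesis
    unfolding theta_add_defect_def args theta_inverse[OF norm_p d] theta_1[OF norm_p] using b c d
    by (simp add: field_simps)
qed

lemma theta_add_defect_at_b: "theta_add_defect p b c d (b / d) = 0"
proof -
  have args: "(b / d) * (d^2 / (b * c)) = d / c" "(b / d) * (d / b) = 1" "(b / d) * (d / c) = b / c"
    "(b / d) * d = b" "(b / d) * (d / (b * c)) = 1 / c"
    using b c d by (simp_all add: field_simps power2_eq_square)
  have inv: "theta (c / d) p = - theta (d / c) p / (d / c)"
    using theta_inverse[OF norm_p, of "d / c"] c d by simp
  show ?thesis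
    unfolding theta_add_defect_def args inv theta_inverse[OF norm_p c] theta_1[OF norm_p] using b c d
    by (simp add: field_simps)
qed

lemma theta_add_denom_eq_0D:
  assumes "z \<noteq> 0" "theta_add_denom p b c d z = 0"
  shows "\<exists>k. z = p powi k \<or> z = p powi k * (b * c / d^2)"
proof -
  from assms(2) consider "theta z p = 0" | "theta (z * (d^2 / (b * c))) p = 0"
    unfolding theta_add_denom_def by auto
  then show ?thesis
  proof cases
    case 1
    then show ?thesis
      using theta_eq_0_imp_power_int[OF norm_p assms(1)] by blast
  next
    case 2
    moreover have "z * (d^2 / (b * c)) \<noteq> 0"
      using assms(1) b c d by simp
    ultimately obtain k where "z * (d^2 / (b * c)) = p powi k"
      using theta_eq_0_imp_power_int[OF norm_p] by blast
    then have "z = p powi k * (b * c / d^2)"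
      using b c d by (simp add: field_simps)
    then show ?thesis
      by blast
  qed
qed

lemma analytic_theta_add_defect_div_denom:
  assumes "z \<noteq> 0" "theta_add_denom p b c d z \<noteq> 0"
  shows "(\<lambda>x. theta_add_defect p b c d x / theta_add_denom p b c d x) analytic_on {z}"
proof -
  have "theta_add_defect p b c d analytic_on -{0}" "theta_add_denom p b c d analytic_on -{0}"
    using holomorphic_theta_add_defect[OF norm_p b c d] holomorphic_theta_add_denom[OF norm_p b c d]
    by (simp_all add: analytic_on_open open_Compl)
  then have "theta_add_defect p b c d analytic_on {z}" "theta_add_denom p b c d analytic_on {z}"
    using assms(1) by (auto intro: analytic_on_subset)
  then show ?thesis
    using assms(2) by (intro analytic_intros) auto
qed

lemma theta_add_quotient_eq:
  assumes "z \<noteq> 0" "theta_add_denom p b c d z \<noteq> 0"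
  shows "theta_add_quotient p b c d z = theta_add_defect p b c d z / theta_add_denom p b c d z"
  unfolding theta_add_quotient_def using analytic_theta_add_defect_div_denom[OF assms] by simp

lemma theta_add_quotient_mult_nome:
  assumes "x \<noteq> 0"
  shows "theta_add_quotient p b c d (p * x) = theta_add_quotient p b c d x"
proof -
  let ?g = "\<lambda>x. theta_add_defect p b c d x / theta_add_denom p b c d x"
  have "theta_add_quotient p b c d (p * x) = remove_sings (?g \<circ> times p) x"
    unfolding theta_add_quotient_def using filtermap_times_at[OF p] by (rule remove_sings_compose[symmetric])
  also have "\<dots> = theta_add_quotient p b c d x"
    unfolding theta_add_quotient_def
  proof (rule remove_sings_cong)
    have "eventually (\<lambda>y. y \<in> -{0}) (at x)"
      using assms by (intro eventually_at_in_open') auto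
    then show "eventually (\<lambda>y. (?g \<circ> times p) y = ?g y) (at x)"
    proof eventually_elim
      case (elim y)
      then have "y * y * (d^2 / (b * c)) \<noteq> 0"
        using b c d by simp
      then show ?case
        by (simp add: theta_add_defect_mult_nome theta_add_denom_mult_nome
            elim divide_cancel_right)
    qed
  qed simp
  finally show ?thesis .
qed

end

text \<open>Genericity makes the zeros \<open>1\<close> and \<open>b c/d\<^sup>2\<close> of the denominator simple and keeps \<open>b/d\<close>
  off its zero set.\<close>
context
  fixes p b c d :: complex
  assumes norm_p: "norm p < 1" and p: "p \<noteq> 0" and b: "b \<noteq> 0" and c: "c \<noteq> 0" and d: "d \<noteq> 0"
    and generic: "\<And>k. d^2 / (b * c) \<noteq> p powi k" "\<And>k. b / d \<noteq> p powi k" "\<And>k. d / c \<noteq> p powi k"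
begin

lemma theta_generic_nonzero: "theta (d^2 / (b * c)) p \<noteq> 0" "theta (b * c / d^2) p \<noteq> 0"
proof -
  show nonzero: "theta (d^2 / (b * c)) p \<noteq> 0"
    using theta_nonzero[OF norm_p _ generic(1)] b c d by simp
  show "theta (b * c / d^2) p \<noteq> 0"
    using theta_inverse[OF norm_p, of "d^2 / (b * c)"] nonzero b c d by simp
qed

lemma analytic_theta_add_quotient_at_1: "theta_add_quotient p b c d analytic_on {1}"
  unfolding theta_add_quotient_def
proof (rule remove_sings_divide_analytic_at_simple_zero
    [where S = "-{0}" and K = "\<lambda>y. - (qpinf (p * y) p * qpinf (p / y) p) * theta (y * (d^2 / (b * c))) p"])
  show "(\<lambda>y. - (qpinf (p * y) p * qpinf (p / y) p) * theta (y * (d^2 / (b * c))) p) holomorphic_on -{0}"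
    using norm_p b c d by (intro holomorphic_intros) auto
  show "- (qpinf (p * 1) p * qpinf (p / 1) p) * theta (1 * (d^2 / (b * c))) p \<noteq> 0"
    using qpinf_nonzero[OF norm_p norm_p] theta_generic_nonzero by simp
  show "theta_add_denom p b c d y = (y - 1) * (- (qpinf (p * y) p * qpinf (p / y) p) * theta (y * (d^2 / (b * c))) p)"
    for y
    unfolding theta_add_denom_def theta_eq_factor[OF norm_p, of y] by (simp add: algebra_simps)
qed (auto simp: theta_add_defect_at_1[OF norm_p p b c d] holomorphic_theta_add_defect[OF norm_p b c d])

lemma analytic_theta_add_quotient_at_bc: "theta_add_quotient p b c d analytic_on {b * c / d^2}"
  unfolding theta_add_quotient_def
proof (rule remove_sings_divide_analytic_at_simple_zero
    [where S = "-{0}" and K = "\<lambda>y. theta y p * (- (d^2 / (b * c))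
        * (qpinf (p * (y * (d^2 / (b * c)))) p * qpinf (p / (y * (d^2 / (b * c)))) p))"])
  show "(\<lambda>y. theta y p * (- (d^2 / (b * c))
      * (qpinf (p * (y * (d^2 / (b * c)))) p * qpinf (p / (y * (d^2 / (b * c)))) p))) holomorphic_on -{0}"
    using norm_p b c d by (intro holomorphic_intros) auto
  have one: "b * c / d^2 * (d^2 / (b * c)) = 1"
    using b c d by (simp add: field_simps)
  show "theta (b * c / d^2) p * (- (d^2 / (b * c))
      * (qpinf (p * (b * c / d^2 * (d^2 / (b * c)))) p * qpinf (p / (b * c / d^2 * (d^2 / (b * c)))) p)) \<noteq> 0"
    unfolding one using qpinf_nonzero[OF norm_p norm_p] theta_generic_nonzero b c d by simp
  show "theta_add_denom p b c d y = (y - b * c / d^2) * (theta y p * (- (d^2 / (b * c))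
      * (qpinf (p * (y * (d^2 / (b * c)))) p * qpinf (p / (y * (d^2 / (b * c)))) p)))" for y
    unfolding theta_add_denom_def theta_eq_factor[OF norm_p, of "y * (d^2 / (b * c))"]
    using b c d by (simp add: field_simps)
qed (use b c d in \<open>auto simp: theta_add_defect_at_bc[OF norm_p p b c d]
    holomorphic_theta_add_defect[OF norm_p b c d]\<close>)

lemma analytic_theta_add_quotient:
  assumes "z \<noteq> 0"
  shows "theta_add_quotient p b c d analytic_on {z}"
proof (cases "theta_add_denom p b c d z = 0")
  case False
  then show ?thesis
    unfolding theta_add_quotient_def
    by (intro remove_sings_analytic_on analytic_theta_add_defect_div_denom[OF norm_p p b c d assms])
next
  case True
  then obtain k where "z = p powi k \<or> z = p powi k * (b * c / d^2)"
    using theta_add_denom_eq_0D[OF norm_p p b c d assms] by blast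
  then have "p powi (- k) * z \<in> {1, b * c / d^2}"
    using p by (auto simp: power_int_minus)
  then have "theta_add_quotient p b c d analytic_on {p powi (- k) * z}"
    using analytic_theta_add_quotient_at_1 analytic_theta_add_quotient_at_bc by auto
  then show ?thesis
  proof (rule analytic_at_if_mult_periodic[rotated 3])
    show "theta_add_quotient p b c d (p powi (- k) * x) = theta_add_quotient p b c d x" if "x \<noteq> 0" for x
      by (rule mult_periodic_power_int[of p "theta_add_quotient p b c d",
            OF p theta_add_quotient_mult_nome[OF norm_p p b c d] that])
  qed (use p assms in auto)
qed

lemma theta_add_quotient_eq_0:
  assumes "z \<noteq> 0"
  shows "theta_add_quotient p b c d z = 0"
proof -
  have "theta_add_quotient p b c d analytic_on -{0}"
    using analytic_theta_add_quotient analytic_on_analytic_at by blast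
  then have holomorphic: "theta_add_quotient p b c d holomorphic_on -{0}"
    by (rule analytic_imp_holomorphic)
  have "b / d * (d^2 / (b * c)) = d / c"
    using b c d by (simp add: field_simps power2_eq_square)
  then have "theta_add_denom p b c d (b / d) \<noteq> 0"
    unfolding theta_add_denom_def
    using theta_nonzero[OF norm_p _ generic(2)] theta_nonzero[OF norm_p _ generic(3)] b c d by simp
  then have "theta_add_quotient p b c d (b / d) = 0"
    using theta_add_quotient_eq[OF norm_p p b c d] theta_add_defect_at_b[OF norm_p p b c d] b d by simp
  then show ?thesis
    using mult_periodic_holomorphic_constant[OF _ norm_p holomorphic
        theta_add_quotient_mult_nome[OF norm_p p b c d] assms, of "b / d"] p b d by simp
qed

lemma theta_add_defect_eq_0_generic:
  assumes "x \<noteq> 0"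
  shows "theta_add_defect p b c d x = 0"
proof (rule continuous_on_zero_off_countable
    [where S = "-{0}" and F = "theta_add_defect p b c d"
      and C = "range (\<lambda>k. p powi k) \<union> range (\<lambda>k. p powi k * (b * c / d^2))"])
  show "continuous_on (-{0}) (theta_add_defect p b c d)"
    by (rule holomorphic_on_imp_continuous_on[OF holomorphic_theta_add_defect[OF norm_p b c d]])
  fix y assume "y \<in> -{0} - (range (\<lambda>k. p powi k) \<union> range (\<lambda>k. p powi k * (b * c / d^2)))"
  then have "y \<noteq> 0" "theta_add_denom p b c d y \<noteq> 0"
    using theta_add_denom_eq_0D[OF norm_p p b c d, of y] by blast+
  then show "theta_add_defect p b c d y = 0"
    using theta_add_quotient_eq_0 theta_add_quotient_eq[OF norm_p p b c d] by simp
qed (use assms in auto)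

end

text \<open>For fixed \<open>x, b, c\<close> the genericity hypotheses exclude only countably many \<open>d\<close>.\<close>
lemma theta_add_defect_eq_0:
  fixes p b c d x :: complex
  assumes norm_p: "norm p < 1" and "x \<noteq> 0" "b \<noteq> 0" "c \<noteq> 0" "d \<noteq> 0"
  shows "theta_add_defect p b c d x = 0"
proof (cases "p = 0")
  case True
  then show ?thesis
    unfolding True theta_add_defect_def theta_nome_0 using assms by (simp add: field_simps power2_eq_square)
next
  case False
  define C where "C = range (\<lambda>k. b * p powi k) \<union> range (\<lambda>k. c * p powi k)
    \<union> {e. e^2 \<in> range (\<lambda>k. b * c * p powi k)}"
  have "countable C"
    unfolding C_def by (simp add: countable_power2_preimage)
  show ?thesis
  proof (rule continuous_on_zero_off_countable
      [where S = "-{0}" and F = "\<lambda>d. theta_add_defect p b c d x" and C = C])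
    show "continuous_on (-{0}) (\<lambda>d. theta_add_defect p b c d x)"
      unfolding theta_add_defect_def using assms
      by (intro holomorphic_on_imp_continuous_on holomorphic_intros) auto
    fix e assume e: "e \<in> -{0} - C"
    show "theta_add_defect p b c e x = 0"
    proof (rule theta_add_defect_eq_0_generic[OF norm_p False assms(3,4) _ _ _ _ assms(2)])
      show "e \<noteq> 0"
        using e by simp
      show "e^2 / (b * c) \<noteq> p powi k" for k
      proof
        assume "e^2 / (b * c) = p powi k"
        then have "e^2 = b * c * p powi k"
          using assms(3,4) by (simp add: field_simps)
        with e show False
          unfolding C_def by blast
      qed
      show "b / e \<noteq> p powi k" for k
      proof
        assume "b / e = p powi k"
        then have "e = b * p powi (- k)"
          using e False by (auto simp: power_int_minus field_simps)
        with e show False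
          unfolding C_def by blast
      qed
      show "e / c \<noteq> p powi k" for k
      proof
        assume "e / c = p powi k"
        then have "e = c * p powi k"
          using assms(4) by (simp add: field_simps)
        with e show False
          unfolding C_def by blast
      qed
    qed
  qed (use assms \<open>countable C\<close> in auto)
qed

theorem theta_addition:
  fixes p a b c d :: complex
  assumes "norm p < 1" "a \<noteq> 0" "b \<noteq> 0" "c \<noteq> 0" "d \<noteq> 0"
  shows "theta a p * theta b p * theta c p * theta (a * d^2 / (b * c)) p
       - theta d p * theta (a * d / b) p * theta (a * d / c) p * theta (b * c / d) p
       = d * theta (a * d) p * theta (b / d) p * theta (c / d) p * theta (a * d / (b * c)) p"
  using theta_add_defect_eq_0[OF assms] unfolding theta_add_defect_def by (simp add: algebra_simps)

section \<open>Elliptic shifted factorials\<close>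

lemma epoch_0 [simp]: "epoch x Q p 0 = 1"
  unfolding epoch_def by simp

lemma epoch_Suc: "epoch x Q p (Suc k) = epoch x Q p k * theta (x * Q ^ k) p"
  unfolding epoch_def by simp

lemma epoch_Suc_shift:
  assumes "y = x * Q"
  shows "epoch x Q p (Suc k) = theta x p * epoch y Q p k"
  unfolding epoch_def assms prod.lessThan_Suc_shift by (simp add: mult.assoc)

lemma epoch_nonzero_mono:
  assumes "epoch x Q p n \<noteq> 0" "k \<le> n"
  shows "epoch x Q p k \<noteq> 0"
  using assms unfolding epoch_def by (auto simp: prod_zero_iff)

text \<open>The hypothesis on \<open>y\<close> says \<open>y = Q^(1-n)/x\<close>; each of the last \<open>k\<close> factors is reversed by
  \<open>theta z p = - z * theta (1/z) p\<close>.\<close>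
lemma epoch_reverse:
  fixes x Q p y :: complex
  assumes "norm p < 1" "x \<noteq> 0" "Q \<noteq> 0" "y * Q ^ n * x = Q" "k \<le> n"
  shows "epoch x Q p n = epoch x Q p (n - k) * (\<Prod>i<k. - x * Q ^ (n - 1 - i)) * epoch y Q p k"
  using assms(5)
proof (induction k)
  case (Suc k)
  have split: "n - k = Suc (n - Suc k)"
    using Suc.prems by simp
  have nonzero: "x * Q ^ (n - 1 - k) \<noteq> 0"
    using assms(2,3) by simp
  have inverse: "1 / (x * Q ^ (n - 1 - k)) = y * Q ^ k"
  proof -
    have "Q ^ n = Q ^ (n - 1 - k) * Q ^ k * Q"
      using Suc.prems by (simp flip: power_add power_Suc2)
    then show ?thesis
      using assms(2-4) by (simp add: field_simps)
  qed
  have "theta (x * Q ^ (n - 1 - k)) p = - (x * Q ^ (n - 1 - k)) * theta (1 / (x * Q ^ (n - 1 - k))) p"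
    using theta_inverse[OF assms(1) nonzero] nonzero by simp
  then have "theta (x * Q ^ (n - 1 - k)) p = - (x * Q ^ (n - 1 - k)) * theta (y * Q ^ k) p"
    unfolding inverse .
  then show ?case
    using Suc by (simp add: split epoch_Suc prod.lessThan_Suc mult_ac)
qed simp

lemma prod_reversal_monomials_eq:
  fixes x1 x2 x3 x4 Q1 Q2 Q3 Q4 y1 y2 y3 y4 R1 R2 R3 R4 :: complex
  assumes "x1 * x2 * x3 * x4 = y1 * y2 * y3 * y4" "Q1 * Q2 * Q3 * Q4 = R1 * R2 * R3 * R4"
  shows "(\<Prod>i<k. - x1 * Q1 ^ (n - 1 - i)) * (\<Prod>i<k. - x2 * Q2 ^ (n - 1 - i))
       * (\<Prod>i<k. - x3 * Q3 ^ (n - 1 - i)) * (\<Prod>i<k. - x4 * Q4 ^ (n - 1 - i))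
       = (\<Prod>i<k. - y1 * R1 ^ (n - 1 - i)) * (\<Prod>i<k. - y2 * R2 ^ (n - 1 - i))
       * (\<Prod>i<k. - y3 * R3 ^ (n - 1 - i)) * (\<Prod>i<k. - y4 * R4 ^ (n - 1 - i))"
proof -
  have collect: "(\<Prod>i<k. - x1 * Q1 ^ (n - 1 - i)) * (\<Prod>i<k. - x2 * Q2 ^ (n - 1 - i))
      * (\<Prod>i<k. - x3 * Q3 ^ (n - 1 - i)) * (\<Prod>i<k. - x4 * Q4 ^ (n - 1 - i))
      = (\<Prod>i<k. (x1 * x2 * x3 * x4) * (Q1 * Q2 * Q3 * Q4) ^ (n - 1 - i))"
    for x1 x2 x3 x4 Q1 Q2 Q3 Q4 :: complex
    by (simp add: prod.distrib[symmetric] power_mult_distrib mult_ac)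
  show ?thesis
    unfolding collect assms ..
qed

section \<open>Telescoping\<close>

definition Phi_num :: "complex \<Rightarrow> complex \<Rightarrow> complex \<Rightarrow> complex \<Rightarrow> complex \<Rightarrow> complex
    \<Rightarrow> complex \<Rightarrow> complex \<Rightarrow> complex \<Rightarrow> nat \<Rightarrow> complex" where
  "Phi_num a b c d q r s t p k =
     epoch (a * r * s * t/q^2) (r * s * t/q^2) p k * epoch (b * r) r p k * epoch (c * s) s p k
      * epoch (a * d^2 * t/(b * c)) t p k"

definition Phi_den :: "complex \<Rightarrow> complex \<Rightarrow> complex \<Rightarrow> complex \<Rightarrow> complex \<Rightarrow> complex
    \<Rightarrow> complex \<Rightarrow> complex \<Rightarrow> complex \<Rightarrow> nat \<Rightarrow> complex" where
  "Phi_den a b c d q r s t p k =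
     epoch (d * q) q p k * epoch (a * d * s * t/(b * q)) (s * t/q) p k * epoch (a * d * r * t/(c * q)) (r * t/q) p k
      * epoch (b * c * r * s/(d * q)) (r * s/q) p k"

definition lam_norm :: "complex \<Rightarrow> complex \<Rightarrow> complex \<Rightarrow> complex \<Rightarrow> complex \<Rightarrow> complex" where
  "lam_norm a b c d p = theta (a * d) p * theta (b/d) p * theta (c/d) p * theta (a * d/(b * c)) p"

definition lam_sum_coeff :: "complex \<Rightarrow> complex \<Rightarrow> complex \<Rightarrow> complex \<Rightarrow> complex \<Rightarrow> complex" where
  "lam_sum_coeff a b c d p = (theta a p * theta b p * theta c p * theta (a * d^2/(b * c)) p)
     / (d * lam_norm a b c d p)"

definition lam_sum_offset :: "complex \<Rightarrow> complex \<Rightarrow> complex \<Rightarrow> complex \<Rightarrow> complex \<Rightarrow> complex" where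
  "lam_sum_offset a b c d p = (theta d p * theta (a * d/b) p * theta (a * d/c) p * theta (b * c/d) p)
     / (d * lam_norm a b c d p)"

lemma Phi_eq_num_div_den: "Phi a b c d q r s t p k = Phi_num a b c d q r s t p k / Phi_den a b c d q r s t p k"
  unfolding Phi_def Phi_num_def Phi_den_def ..

context
  fixes a b c d q r s t p :: complex and n :: nat
  assumes wd: "well_defined a b c d q r s t p n"
begin

lemma wd_norm_nome: "norm p < 1"
  using wd unfolding well_defined_def by simp

lemma wd_nonzero: "a \<noteq> 0" "b \<noteq> 0" "c \<noteq> 0" "d \<noteq> 0" "q \<noteq> 0" "r \<noteq> 0" "s \<noteq> 0" "t \<noteq> 0"
  using wd unfolding well_defined_def by simp_all

lemma lam_norm_nonzero: "lam_norm a b c d p \<noteq> 0"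
  using wd unfolding well_defined_def lam_norm_def by simp

lemma Phi_den_nonzero:
  assumes "k \<le> n"
  shows "Phi_den a b c d q r s t p k \<noteq> 0"
  unfolding Phi_den_def
  by (intro no_zero_divisors epoch_nonzero_mono[OF _ assms]) (use wd in \<open>simp_all add: well_defined_def\<close>)

lemma Phi_num_nonzero:
  assumes "k \<le> n"
  shows "Phi_num a b c d q r s t p k \<noteq> 0"
  unfolding Phi_num_def
  by (intro no_zero_divisors epoch_nonzero_mono[OF _ assms]) (use wd in \<open>simp_all add: well_defined_def\<close>)

lemma Phi_nonzero: "k \<le> n \<Longrightarrow> Phi a b c d q r s t p k \<noteq> 0"
  unfolding Phi_eq_num_div_den using Phi_num_nonzero Phi_den_nonzero by simp

lemma lam_sum_coeff_minus_offset: "lam_sum_coeff a b c d p - lam_sum_offset a b c d p = 1"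
  using theta_addition[OF wd_norm_nome wd_nonzero(1-4)] lam_norm_nonzero wd_nonzero
  unfolding lam_sum_coeff_def lam_sum_offset_def lam_norm_def by (simp add: field_simps)

lemma lam_0: "lam a b c d q r s t p 0 = 1"
  using lam_norm_nonzero unfolding lam_def lam_norm_def by simp

text \<open>The addition formula at \<open>a (r s t/q^2)^(j+1), b r^(j+1), c s^(j+1), d q^(j+1)\<close>.\<close>
lemma theta_addition_shifted:
  "theta (a * r * s * t/q^2 * (r * s * t/q^2)^j) p * theta (b * r * r^j) p * theta (c * s * s^j) p
      * theta (a * d^2 * t/(b * c) * t^j) p
    - theta (d * q * q^j) p * theta (a * d * s * t/(b * q) * (s * t/q)^j) p
      * theta (a * d * r * t/(c * q) * (r * t/q)^j) p * theta (b * c * r * s/(d * q) * (r * s/q)^j) p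
    = d * q * q^j * (theta (a * d * (r * s * t/q)^(Suc j)) p * theta (b * r^(Suc j)/(d * q^(Suc j))) p
      * theta (c * s^(Suc j)/(d * q^(Suc j))) p * theta (a * d * t^(Suc j)/(b * c * q^(Suc j))) p)"
proof -
  define A where "A = a * r * s * t/q^2 * (r * s * t/q^2)^j"
  define B where "B = b * r * r^j"
  define C where "C = c * s * s^j"
  define D where "D = d * q * q^j"
  have "A \<noteq> 0" "B \<noteq> 0" "C \<noteq> 0" "D \<noteq> 0"
    unfolding A_def B_def C_def D_def using wd_nonzero by simp_all
  note addition = theta_addition[OF wd_norm_nome this]
  have args: "A * D^2/(B * C) = a * d^2 * t/(b * c) * t^j"
    "A * D/B = a * d * s * t/(b * q) * (s * t/q)^j" "A * D/C = a * d * r * t/(c * q) * (r * t/q)^j"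
    "B * C/D = b * c * r * s/(d * q) * (r * s/q)^j" "A * D/(B * C) = a * d * t^(Suc j)/(b * c * q^(Suc j))"
    and args': "A * D = a * d * (r * s * t/q)^(Suc j)"
    "B/D = b * r^(Suc j)/(d * q^(Suc j))" "C/D = c * s^(Suc j)/(d * q^(Suc j))"
    unfolding A_def B_def C_def D_def using wd_nonzero
    by (simp_all add: field_simps power_mult_distrib power_divide power2_eq_square)
  show ?thesis
    using addition[unfolded args, unfolded args', unfolded A_def B_def C_def D_def]
    by (simp only: mult.assoc)
qed

lemma lam_Suc:
  assumes "Suc j \<le> n"
  shows "lam a b c d q r s t p (Suc j)
    = lam_sum_coeff a b c d p * (Phi a b c d q r s t p (Suc j) - Phi a b c d q r s t p j)"
proof -
  define lam_thetas where "lam_thetas = theta (a * d * (r * s * t/q)^(Suc j)) p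
     * theta (b * r^(Suc j)/(d * q^(Suc j))) p * theta (c * s^(Suc j)/(d * q^(Suc j))) p
     * theta (a * d * t^(Suc j)/(b * c * q^(Suc j))) p"
  define num_step where "num_step = theta (a * r * s * t/q^2 * (r * s * t/q^2)^j) p
     * theta (b * r * r^j) p * theta (c * s * s^j) p * theta (a * d^2 * t/(b * c) * t^j) p"
  define den_step where "den_step = theta (d * q * q^j) p * theta (a * d * s * t/(b * q) * (s * t/q)^j) p
     * theta (a * d * r * t/(c * q) * (r * t/q)^j) p * theta (b * c * r * s/(d * q) * (r * s/q)^j) p"
  have "num_step - den_step = d * q * q^j * lam_thetas"
    unfolding num_step_def den_step_def lam_thetas_def by (rule theta_addition_shifted)
  then have num_step_eq: "num_step = den_step + d * q * q^j * lam_thetas"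
    by (simp add: algebra_simps)
  have Phi_num_Suc: "Phi_num a b c d q r s t p (Suc j) = Phi_num a b c d q r s t p j * num_step"
    unfolding Phi_num_def num_step_def epoch_Suc by (simp add: mult_ac)
  have Phi_den_Suc: "Phi_den a b c d q r s t p (Suc j) = Phi_den a b c d q r s t p j * den_step"
    unfolding Phi_den_def den_step_def epoch_Suc by (simp add: mult_ac)
  have "epoch a (r * s * t/q^2) p (Suc j) = theta a p * epoch (a * r * s * t/q^2) (r * s * t/q^2) p j"
    "epoch b r p (Suc j) = theta b p * epoch (b * r) r p j"
    "epoch c s p (Suc j) = theta c p * epoch (c * s) s p j"
    "epoch (a * d^2/(b * c)) t p (Suc j) = theta (a * d^2/(b * c)) p * epoch (a * d^2 * t/(b * c)) t p j"
    by (rule epoch_Suc_shift; simp)+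
  then have "lam a b c d q r s t p (Suc j) = lam_thetas / lam_norm a b c d p
     * (theta a p * theta b p * theta c p * theta (a * d^2/(b * c)) p * Phi_num a b c d q r s t p j)
     / Phi_den a b c d q r s t p (Suc j) * q^(Suc j)"
    unfolding lam_def lam_thetas_def lam_norm_def Phi_num_def Phi_den_def by (simp add: mult_ac)
  moreover have "Phi_den a b c d q r s t p j \<noteq> 0" "Phi_den a b c d q r s t p (Suc j) \<noteq> 0"
    using Phi_den_nonzero assms by simp_all
  ultimately show ?thesis
    unfolding Phi_eq_num_div_den Phi_num_Suc Phi_den_Suc lam_sum_coeff_def num_step_eq
    using lam_norm_nonzero wd_nonzero(4) by (simp add: field_simps)
qed

lemma sum_lam:
  assumes "m \<le> n"
  shows "(\<Sum>i\<le>m. lam a b c d q r s t p i) = lam_sum_coeff a b c d p * Phi a b c d q r s t p m - lam_sum_offset a b c d p"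
  using assms
proof (induction m)
  case 0
  then show ?case
    using lam_0 lam_sum_coeff_minus_offset by (simp add: Phi_def)
next
  case (Suc m)
  then show ?case
    by (simp add: lam_Suc algebra_simps)
qed

lemma Phi_num_reverse:
  assumes "k \<le> n"
  shows "Phi_num a b c d q r s t p n = Phi_num a b c d q r s t p (n - k)
    * ((\<Prod>i<k. - (a * r * s * t/q^2) * (r * s * t/q^2)^(n-1-i)) * (\<Prod>i<k. - (b * r) * r^(n-1-i))
      * (\<Prod>i<k. - (c * s) * s^(n-1-i)) * (\<Prod>i<k. - (a * d^2 * t/(b * c)) * t^(n-1-i)))
    * (epoch ((q^2/(r * s * t))^n/a) (r * s * t/q^2) p k * epoch (1/(r^n * b)) r p k
      * epoch (1/(s^n * c)) s p k * epoch (b * c/(t^n * a * d^2)) t p k)"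
proof -
  have "epoch (a * r * s * t/q^2) (r * s * t/q^2) p n = epoch (a * r * s * t/q^2) (r * s * t/q^2) p (n - k)
      * (\<Prod>i<k. - (a * r * s * t/q^2) * (r * s * t/q^2)^(n-1-i)) * epoch ((q^2/(r * s * t))^n/a) (r * s * t/q^2) p k"
    "epoch (b * r) r p n = epoch (b * r) r p (n - k) * (\<Prod>i<k. - (b * r) * r^(n-1-i)) * epoch (1/(r^n * b)) r p k"
    "epoch (c * s) s p n = epoch (c * s) s p (n - k) * (\<Prod>i<k. - (c * s) * s^(n-1-i)) * epoch (1/(s^n * c)) s p k"
    "epoch (a * d^2 * t/(b * c)) t p n = epoch (a * d^2 * t/(b * c)) t p (n - k)
      * (\<Prod>i<k. - (a * d^2 * t/(b * c)) * t^(n-1-i)) * epoch (b * c/(t^n * a * d^2)) t p k"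
    by (rule epoch_reverse[OF wd_norm_nome _ _ _ assms];
        use wd_nonzero in \<open>simp add: field_simps power_mult_distrib power_divide\<close>)+
  then show ?thesis
    unfolding Phi_num_def by (simp add: mult_ac)
qed

lemma Phi_den_reverse:
  assumes "k \<le> n"
  shows "Phi_den a b c d q r s t p n = Phi_den a b c d q r s t p (n - k)
    * ((\<Prod>i<k. - (d * q) * q^(n-1-i)) * (\<Prod>i<k. - (a * d * s * t/(b * q)) * (s * t/q)^(n-1-i))
      * (\<Prod>i<k. - (a * d * r * t/(c * q)) * (r * t/q)^(n-1-i))
      * (\<Prod>i<k. - (b * c * r * s/(d * q)) * (r * s/q)^(n-1-i)))
    * (epoch (1/(q^n * d)) q p k * epoch (b * (q/(s * t))^n/(a * d)) (s * t/q) p k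
      * epoch (c * (q/(r * t))^n/(a * d)) (r * t/q) p k * epoch (d * (q/(r * s))^n/(b * c)) (r * s/q) p k)"
proof -
  have "epoch (d * q) q p n = epoch (d * q) q p (n - k) * (\<Prod>i<k. - (d * q) * q^(n-1-i)) * epoch (1/(q^n * d)) q p k"
    "epoch (a * d * s * t/(b * q)) (s * t/q) p n = epoch (a * d * s * t/(b * q)) (s * t/q) p (n - k)
      * (\<Prod>i<k. - (a * d * s * t/(b * q)) * (s * t/q)^(n-1-i)) * epoch (b * (q/(s * t))^n/(a * d)) (s * t/q) p k"
    "epoch (a * d * r * t/(c * q)) (r * t/q) p n = epoch (a * d * r * t/(c * q)) (r * t/q) p (n - k)
      * (\<Prod>i<k. - (a * d * r * t/(c * q)) * (r * t/q)^(n-1-i)) * epoch (c * (q/(r * t))^n/(a * d)) (r * t/q) p k"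
    "epoch (b * c * r * s/(d * q)) (r * s/q) p n = epoch (b * c * r * s/(d * q)) (r * s/q) p (n - k)
      * (\<Prod>i<k. - (b * c * r * s/(d * q)) * (r * s/q)^(n-1-i)) * epoch (d * (q/(r * s))^n/(b * c)) (r * s/q) p k"
    by (rule epoch_reverse[OF wd_norm_nome _ _ _ assms];
        use wd_nonzero in \<open>simp add: field_simps power_mult_distrib power_divide\<close>)+
  then show ?thesis
    unfolding Phi_den_def by (simp add: mult_ac)
qed

text \<open>The reversal monomials of numerator and denominator coincide because \<open>\<Phi>\<close> is balanced: the
  product of its four numerator parameters equals that of its four denominator parameters, and
  likewise for the bases.\<close>
lemma reversed_epoch_ratio_eq:
  assumes "k \<le> n"
  shows "((epoch (1/(q^n * d)) q p k * epoch (b * (q/(s * t))^n/(a * d)) (s * t/q) p k)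
        / (epoch ((q^2/(r * s * t))^n/a) (r * s * t/q^2) p k * epoch (1/(r^n * b)) r p k))
     * ((epoch (c * (q/(r * t))^n/(a * d)) (r * t/q) p k * epoch (d * (q/(r * s))^n/(b * c)) (r * s/q) p k)
        / (epoch (1/(s^n * c)) s p k * epoch (b * c/(t^n * a * d^2)) t p k))
    = Phi a b c d q r s t p (n - k) / Phi a b c d q r s t p n" (is "?ratio = _")
proof -
  have "(\<Prod>i<k. - (a * r * s * t/q^2) * (r * s * t/q^2)^(n-1-i)) * (\<Prod>i<k. - (b * r) * r^(n-1-i))
      * (\<Prod>i<k. - (c * s) * s^(n-1-i)) * (\<Prod>i<k. - (a * d^2 * t/(b * c)) * t^(n-1-i))
    = (\<Prod>i<k. - (d * q) * q^(n-1-i)) * (\<Prod>i<k. - (a * d * s * t/(b * q)) * (s * t/q)^(n-1-i))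
      * (\<Prod>i<k. - (a * d * r * t/(c * q)) * (r * t/q)^(n-1-i))
      * (\<Prod>i<k. - (b * c * r * s/(d * q)) * (r * s/q)^(n-1-i))"
    by (rule prod_reversal_monomials_eq) (use wd_nonzero in \<open>simp_all add: field_simps power2_eq_square\<close>)
  moreover have "Phi_num a b c d q r s t p n \<noteq> 0" "Phi_den a b c d q r s t p n \<noteq> 0"
    "Phi_num a b c d q r s t p (n - k) \<noteq> 0" "Phi_den a b c d q r s t p (n - k) \<noteq> 0"
    using Phi_num_nonzero Phi_den_nonzero by simp_all
  ultimately show ?thesis
    unfolding Phi_eq_num_div_den Phi_num_reverse[OF assms] Phi_den_reverse[OF assms]
    by (simp add: field_simps)
qed

lemma G_eq_partial_sum:
  assumes "k \<le> n"
  shows "G a b c d q r s t p n k = (\<Sum>j\<le>n - k. lam a b c d q r s t p j) / Phi a b c d q r s t p n"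
proof -
  have "G a b c d q r s t p n k = lam_sum_coeff a b c d p
      * (((epoch (1/(q^n * d)) q p k * epoch (b * (q/(s * t))^n/(a * d)) (s * t/q) p k)
        / (epoch ((q^2/(r * s * t))^n/a) (r * s * t/q^2) p k * epoch (1/(r^n * b)) r p k))
     * ((epoch (c * (q/(r * t))^n/(a * d)) (r * t/q) p k * epoch (d * (q/(r * s))^n/(b * c)) (r * s/q) p k)
        / (epoch (1/(s^n * c)) s p k * epoch (b * c/(t^n * a * d^2)) t p k)))
      - lam_sum_offset a b c d p * (1 / Phi a b c d q r s t p n)"
    unfolding G_def lam_sum_coeff_def lam_sum_offset_def lam_norm_def by (simp only: mult.assoc)
  also have "\<dots> = (lam_sum_coeff a b c d p * Phi a b c d q r s t p (n - k) - lam_sum_offset a b c d p)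
        / Phi a b c d q r s t p n"
    unfolding reversed_epoch_ratio_eq[OF assms] using Phi_nonzero[of n] by (simp add: field_simps)
  also have "\<dots> = (\<Sum>j\<le>n - k. lam a b c d q r s t p j) / Phi a b c d q r s t p n"
    by (simp add: sum_lam)
  finally show ?thesis .
qed

end

lemma sum_mult_partial_sums_swap:
  fixes x y :: "nat \<Rightarrow> 'a::comm_semiring_1"
  shows "(\<Sum>k\<le>n. x k * (\<Sum>j\<le>n - k. y j)) = (\<Sum>k\<le>n. y k * (\<Sum>j\<le>n - k. x j))"
proof -
  have triangle: "(\<Sum>k\<le>n. x k * (\<Sum>j\<le>n - k. y j)) = (\<Sum>(i, j)\<in>{(i, j). i + j \<le> n}. x i * y j)"
    for x y :: "nat \<Rightarrow> 'a"
  proof -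
    have "(\<Sum>k\<le>n. x k * (\<Sum>j\<le>n - k. y j)) = (\<Sum>(i, j)\<in>Sigma {..n} (\<lambda>k. {..n - k}). x i * y j)"
      by (simp add: sum_distrib_left sum.Sigma)
    also have "Sigma {..n} (\<lambda>k. {..n - k}) = {(i, j). i + j \<le> n}"
      by auto
    finally show ?thesis .
  qed
  have "(\<Sum>(i, j)\<in>{(i, j). i + j \<le> n}. x i * y j) = (\<Sum>(i, j)\<in>{(i, j). i + j \<le> n}. y i * x j)"
    by (rule sum.reindex_bij_witness[where i = prod.swap and j = prod.swap]) (auto simp: mult.commute)
  then show ?thesis
    unfolding triangle .
qed

theorem mainTheorem12:
  fixes a b c d q r s t p A B C D Q R S T P :: complex and n :: nat
  assumes "well_defined a b c d q r s t p n"
    and "well_defined A B C D Q R S T P n"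
  shows "(\<Sum>k\<le>n. lam a b c d q r s t p k  *  G A B C D Q R S T P n k)
       = Phi a b c d q r s t p n / Phi A B C D Q R S T P n
          *  (\<Sum>k\<le>n. lam A B C D Q R S T P k  *  G a b c d q r s t p n k)"
proof -
  let ?x = "lam a b c d q r s t p" and ?y = "lam A B C D Q R S T P"
  have "(\<Sum>k\<le>n. ?x k * G A B C D Q R S T P n k) = (\<Sum>k\<le>n. ?x k * (\<Sum>j\<le>n - k. ?y j)) / Phi A B C D Q R S T P n"
    unfolding sum_divide_distrib by (intro sum.cong) (simp_all add: G_eq_partial_sum[OF assms(2)])
  moreover have "(\<Sum>k\<le>n. ?y k * G a b c d q r s t p n k) = (\<Sum>k\<le>n. ?y k * (\<Sum>j\<le>n - k. ?x j)) / Phi a b c d q r s t p n"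
    unfolding sum_divide_distrib by (intro sum.cong) (simp_all add: G_eq_partial_sum[OF assms(1)])
  ultimately show ?thesis
    using Phi_nonzero[OF assms(1), of n] sum_mult_partial_sums_swap[of ?x ?y n] by simp
qed

end
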